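(* Fix an integer $r\ge0$. There is a constant $C_r>0$ depending only on $r$ such that for every $n\ge1$ and every $\theta\in\mathbb{R}^n$, $$\|\theta-P^{(n,r)}\theta\|_\infty\le C_r\,\mathrm{TV}^{(r+1)}(\theta).$$
   Context: $P^{(n,r)}$ is the orthogonal projection matrix in $\mathbb{R}^n$ onto the subspace $\{(p(1/n),p(2/n),\dots,p(n/n)): p\text{ a real polynomial of degree at most } r\}$. For $\theta\in\mathbb{R}^n$: $D^{(1)}\theta=(\theta_2-\theta_1,\dots,\theta_n-\theta_{n-1})$, $D^{(s)}\theta=D^{(1)}(D^{(s-1)}\theta)\in\mathbb{R}^{n-s}$, and $\mathrm{TV}^{(s)}(\theta)=n^{s-1}\|D^{(s)}\theta\|_1$; thus $\mathrm{TV}^{(r+1)}(\theta)=n^{r}\|D^{(r+1)}\theta\|_1$. *)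

theory Defs
  imports Complex_Main "HOL-Computational_Algebra.Polynomial"
begin

text \<open>Vectors in R^n are represented as functions nat \<Rightarrow> real, with coordinates
  indexed by 1..n (values outside 1..n are irrelevant).\<close>

definition polyvec :: "nat \<Rightarrow> real poly \<Rightarrow> nat \<Rightarrow> real" where
  "polyvec n p = (\<lambda>i. if i \<in> {1..n} then poly p (real i / real n) else 0)"

definition proj :: "nat \<Rightarrow> nat \<Rightarrow> (nat \<Rightarrow> real) \<Rightarrow> nat \<Rightarrow> real" where
  "proj n r \<theta> = (THE v. (\<exists>p. degree p \<le> r \<and> v = polyvec n p) \<and>
      (\<forall>q. degree q \<le> r \<longrightarrow> (\<Sum>i=1..n. (\<theta> i - v i) * polyvec n q i) = 0))"

definition D1 :: "(nat \<Rightarrow> real) \<Rightarrow> nat \<Rightarrow> real" where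
  "D1 \<theta> = (\<lambda>i. \<theta> (i + 1) - \<theta> i)"

text \<open>D^(s) theta, whose meaningful coordinates are 1..n-s.\<close>
definition Dk :: "nat \<Rightarrow> (nat \<Rightarrow> real) \<Rightarrow> nat \<Rightarrow> real" where
  "Dk s \<theta> = (D1 ^^ s) \<theta>"

definition TV :: "nat \<Rightarrow> nat \<Rightarrow> (nat \<Rightarrow> real) \<Rightarrow> real" where
  "TV n s \<theta> = real n ^ (s - 1) * (\<Sum>i=1..n-s. \<bar>Dk s \<theta> i\<bar>)"

definition supnorm :: "nat \<Rightarrow> (nat \<Rightarrow> real) \<Rightarrow> real" where
  "supnorm n x = Max ((\<lambda>i. \<bar>x i\<bar>) ` {1..n})"

end

theory Submission
  imports Defs "HOL-Analysis.Convex"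
begin

(* By a discrete Taylor expansion, theta is within TV^(r+1)(theta) of the grid values of some
   polynomial Q of degree at most r, uniformly on {1..n}.  The difference u between the
   projection and these grid values is again a polynomial vector, and the residual of the
   projection is orthogonal to it, so |u|_2^2 <= TV * |u|_1 and hence |u|_1 <= n * TV by
   Cauchy-Schwarz.  A discrete Nikolskii inequality n |u|_inf <= C_r |u|_1 for polynomial
   vectors, proved by annihilating the polynomial with an (r+1)-st finite difference and
   averaging over the step size, turns this into |u|_inf <= C_r * TV. *)

definition fwd_diff :: "real \<Rightarrow> (real \<Rightarrow> real) \<Rightarrow> real \<Rightarrow> real" where
  "fwd_diff h f x = f (x + h) - f x"

lemma degree_pcompose_shift_diff_le:
  fixes P :: "real poly"
  assumes "degree P \<le> Suc s"
  shows "degree (pcompose P [:h, 1:] - P) \<le> s"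
proof (rule degree_le, intro allI impI)
  fix i assume "s < i"
  have "lead_coeff (pcompose P [:h, 1:]) = lead_coeff P"
    by (subst lead_coeff_comp) auto
  moreover have "degree (pcompose P [:h, 1:]) = degree P"
    by (simp add: degree_pcompose)
  ultimately show "coeff (pcompose P [:h, 1:] - P) i = 0"
    using \<open>s < i\<close> assms by (cases "i = degree P") (auto simp: coeff_eq_0)
qed

lemma fwd_diff_poly: "fwd_diff h (poly P) = poly (pcompose P [:h, 1:] - P)"
  by (auto simp: fwd_diff_def poly_pcompose algebra_simps)

lemma fwd_diff_power_poly_eq_0:
  assumes "degree P \<le> s"
  shows "(fwd_diff h ^^ Suc s) (poly P) = (\<lambda>_. 0)"
  using assms
proof (induction s arbitrary: P)
  case 0
  then obtain c where "P = [:c:]" by (auto elim: degree_eq_zeroE)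
  then show ?case by (simp add: fwd_diff_def fun_eq_iff)
next
  case (Suc s)
  have "(fwd_diff h ^^ Suc (Suc s)) (poly P) = (fwd_diff h ^^ Suc s) (fwd_diff h (poly P))"
    by (simp only: funpow_Suc_right comp_def)
  also have "\<dots> = (\<lambda>_. 0)"
    unfolding fwd_diff_poly by (intro Suc.IH degree_pcompose_shift_diff_le Suc.prems)
  finally show ?case .
qed

lemma sum_abs_shift:
  "(\<Sum>k\<le>s. \<bar>f (a + h + real k * h)\<bar>) = (\<Sum>k=1..Suc s. \<bar>f (a + real k * h)\<bar>)"
proof -
  have "(\<Sum>k=1..Suc s. \<bar>f (a + real k * h)\<bar>) = (\<Sum>k=0..s. \<bar>f (a + real (Suc k) * h)\<bar>)"
    using sum.shift_bounds_cl_Suc_ivl[of "\<lambda>k. \<bar>f (a + real k * h)\<bar>" 0 s] by simp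
  then show ?thesis by (simp add: atMost_atLeast0 algebra_simps)
qed

lemma abs_fwd_diff_power_le:
  "\<bar>(fwd_diff h ^^ s) f a\<bar> \<le> 2 ^ s * (\<Sum>k\<le>s. \<bar>f (a + real k * h)\<bar>)"
proof (induction s arbitrary: a)
  case 0
  then show ?case by simp
next
  case (Suc s)
  have "\<bar>(fwd_diff h ^^ Suc s) f a\<bar> \<le> \<bar>(fwd_diff h ^^ s) f (a + h)\<bar> + \<bar>(fwd_diff h ^^ s) f a\<bar>"
    by (simp add: fwd_diff_def)
  also have "\<dots> \<le> 2 ^ s * (\<Sum>k=1..Suc s. \<bar>f (a + real k * h)\<bar>) + 2 ^ s * (\<Sum>k\<le>s. \<bar>f (a + real k * h)\<bar>)"
    using Suc.IH[of "a + h"] Suc.IH[of a] by (simp add: sum_abs_shift)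
  also have "\<dots> \<le> 2 ^ s * (\<Sum>k\<le>Suc s. \<bar>f (a + real k * h)\<bar>) + 2 ^ s * (\<Sum>k\<le>Suc s. \<bar>f (a + real k * h)\<bar>)"
    by (intro add_mono mult_left_mono sum_mono2) auto
  also have "\<dots> = 2 ^ Suc s * (\<Sum>k\<le>Suc s. \<bar>f (a + real k * h)\<bar>)"
    by simp
  finally show ?case .
qed

lemma abs_le_fwd_diff_power:
  "\<bar>f a\<bar> \<le> \<bar>(fwd_diff h ^^ s) f a\<bar> + 2 ^ s * (\<Sum>k=1..s. \<bar>f (a + real k * h)\<bar>)"
proof (induction s)
  case 0
  then show ?case by simp
next
  case (Suc s)
  have "\<bar>(fwd_diff h ^^ s) f a\<bar> \<le> \<bar>(fwd_diff h ^^ Suc s) f a\<bar> + \<bar>(fwd_diff h ^^ s) f (a + h)\<bar>"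
    by (simp add: fwd_diff_def)
  moreover have "\<bar>(fwd_diff h ^^ s) f (a + h)\<bar> \<le> 2 ^ s * (\<Sum>k=1..Suc s. \<bar>f (a + real k * h)\<bar>)"
    using abs_fwd_diff_power_le[where a = "a + h" and s = s and h = h and f = f]
    unfolding sum_abs_shift .
  moreover have "2 ^ s * (\<Sum>k=1..s. \<bar>f (a + real k * h)\<bar>) \<le> 2 ^ s * (\<Sum>k=1..Suc s. \<bar>f (a + real k * h)\<bar>)"
    by (intro mult_left_mono sum_mono2) auto
  ultimately show ?case using Suc.IH by (simp only: power_Suc)
qed

lemma abs_poly_le_sum_shifts:
  assumes "degree P \<le> r"
  shows "\<bar>poly P a\<bar> \<le> 2 ^ (r + 1) * (\<Sum>k=1..r+1. \<bar>poly P (a + real k * h)\<bar>)"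
  using abs_le_fwd_diff_power[where f = "poly P" and s = "r + 1"] fwd_diff_power_poly_eq_0[OF assms]
  by simp

lemma mult_abs_poly_grid_le:
  fixes P :: "real poly"
  assumes deg: "degree P \<le> r" and M: "2 * (r + 1) * M \<le> n" and i: "i \<in> {1..n}"
  shows "real M * \<bar>poly P (real i / real n)\<bar>
           \<le> 2 ^ (r + 1) * (real r + 1) * (\<Sum>j=1..n. \<bar>poly P (real j / real n)\<bar>)"
proof -
  define u where "u j = \<bar>poly P (real j / real n)\<bar>" for j
  define S where "S = (\<Sum>j=1..n. u j)"
  \<comment> \<open>step towards the farther end of the grid, so that all r + 1 steps stay in {1..n}\<close>
  define \<sigma> where "\<sigma> k m = (if 2 * i \<le> n then i + k * m else i - k * m)" for k m :: nat
  have km: "2 * (k * m) \<le> n" if "k \<le> r + 1" "m \<le> M" for k m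
    using mult_le_mono[OF that] M by (simp add: algebra_simps)
  have \<sigma>_in: "\<sigma> k m \<in> {1..n}" if "k \<le> r + 1" "m \<le> M" for k m
    using km[OF that] i unfolding \<sigma>_def by auto
  have \<sigma>_inj: "inj_on (\<sigma> k) {1..M}" if k: "k \<in> {1..r + 1}" for k
  proof (rule inj_onI)
    fix x y assume "x \<in> {1..M}" "y \<in> {1..M}" and eq: "\<sigma> k x = \<sigma> k y"
    then have "2 * (k * x) \<le> n" "2 * (k * y) \<le> n"
      using k by (auto intro: km)
    with eq have "k * x = k * y"
      unfolding \<sigma>_def by (cases "2 * i \<le> n"; simp only: if_True if_False; arith)
    then show "x = y" using k by simp
  qed
  have step: "u i \<le> 2 ^ (r + 1) * (\<Sum>k=1..r+1. u (\<sigma> k m))" if m: "m \<in> {1..M}" for m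
  proof -
    define h where "h = (if 2 * i \<le> n then 1 else -1) * real m / real n"
    have "real (\<sigma> k m) / real n = real i / real n + real k * h" if "k \<le> r + 1" for k
    proof -
      have "2 * (k * m) \<le> n" using km that m by simp
      then show ?thesis using i unfolding \<sigma>_def h_def by (auto simp: field_simps of_nat_diff)
    qed
    then show ?thesis
      using abs_poly_le_sum_shifts[OF deg, of "real i / real n" h] unfolding u_def by simp
  qed
  have "real M * u i = (\<Sum>m=1..M. u i)" by simp
  also have "\<dots> \<le> (\<Sum>m=1..M. 2 ^ (r + 1) * (\<Sum>k=1..r+1. u (\<sigma> k m)))"
    by (intro sum_mono step)
  also have "\<dots> = 2 ^ (r + 1) * (\<Sum>k=1..r+1. \<Sum>m=1..M. u (\<sigma> k m))"
    by (simp only: sum_distrib_left[symmetric] sum.swap[of _ "{1..M}"])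
  also have "\<dots> \<le> 2 ^ (r + 1) * (\<Sum>k=1..r+1. S)"
  proof (intro mult_left_mono sum_mono)
    fix k assume k: "k \<in> {1..r + 1}"
    have "(\<Sum>m=1..M. u (\<sigma> k m)) = sum u (\<sigma> k ` {1..M})"
      using sum.reindex[OF \<sigma>_inj[OF k], of u] by (simp add: comp_def)
    also have "\<dots> \<le> S"
      unfolding S_def using \<sigma>_in k by (intro sum_mono2) (auto simp: u_def)
    finally show "(\<Sum>m=1..M. u (\<sigma> k m)) \<le> S" .
  qed simp
  finally show ?thesis by (simp add: u_def S_def mult.assoc add.commute)
qed

lemma real_mult_abs_poly_grid_le:
  fixes P :: "real poly"
  assumes deg: "degree P \<le> r" and i: "i \<in> {1..n}"
  shows "real n * \<bar>poly P (real i / real n)\<bar>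
           \<le> 4 * (real r + 1)\<^sup>2 * 2 ^ (r + 1) * (\<Sum>j=1..n. \<bar>poly P (real j / real n)\<bar>)"
    (is "_ * ?u \<le> ?C * ?S")
proof -
  define M where "M = n div (2 * (r + 1))"
  have M_le: "2 * (r + 1) * M \<le> n"
    unfolding M_def by (rule times_div_less_eq_dividend)
  moreover have "n < 2 * (r + 1) * (M + 1)"
    unfolding M_def using dividend_less_times_div[of "2 * (r + 1)" n] by (simp add: algebra_simps)
  moreover have "(r + 1) * 1 \<le> (r + 1) * M" if "M \<noteq> 0"
    using that by (intro mult_le_mono2) simp
  ultimately have n_le_nat: "n \<le> 4 * (r + 1) * M" if "M \<noteq> 0"
    using that by (simp add: algebra_simps)
  have n_le: "real n \<le> 4 * (real r + 1) * real M" if "M \<noteq> 0"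
    using of_nat_mono[OF n_le_nat[OF that], where ?'a = real] by (simp add: add.commute)
  show ?thesis
  proof (cases "M = 0")
    case True
    have "real n \<le> 2 * (real r + 1)"
      using \<open>n < 2 * (r + 1) * (M + 1)\<close> True by simp
    also have "\<dots> = (real r + 1) * 2"
      by simp
    also have "\<dots> \<le> (real r + 1) * (4 * (real r + 1))"
      by (intro mult_left_mono) simp_all
    also have "\<dots> \<le> (real r + 1) * (4 * (real r + 1)) * 2 ^ (r + 1)"
      using one_le_power[of "2::real" "r + 1"] by simp
    also have "\<dots> = ?C"
      by (simp add: power2_eq_square)
    finally have "real n \<le> ?C" .
    moreover have "?u \<le> ?S"
      using i by (intro member_le_sum[of i "{1..n}" "\<lambda>j. \<bar>poly P (real j / real n)\<bar>"]) auto
    ultimately show ?thesis by (intro mult_mono) auto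
  next
    case False
    have "real n * ?u \<le> (4 * (real r + 1) * real M) * ?u"
      using n_le[OF False] by (rule mult_right_mono) simp
    also have "\<dots> = 4 * (real r + 1) * (real M * ?u)"
      by (simp only: mult.assoc)
    also have "\<dots> \<le> 4 * (real r + 1) * (2 ^ (r + 1) * (real r + 1) * ?S)"
      by (intro mult_left_mono mult_abs_poly_grid_le[OF deg M_le i]) simp
    also have "\<dots> = ?C * ?S"
      by (simp add: power2_eq_square)
    finally show ?thesis .
  qed
qed

definition dot :: "nat \<Rightarrow> (nat \<Rightarrow> real) \<Rightarrow> (nat \<Rightarrow> real) \<Rightarrow> real" where
  "dot n x y = (\<Sum>i=1..n. x i * y i)"

lemma dot_diff_left: "dot n (\<lambda>i. x i - y i) z = dot n x z - dot n y z"
  by (simp add: dot_def left_diff_distrib sum_subtractf)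

lemma dot_add_right: "dot n x (\<lambda>i. y i + z i) = dot n x y + dot n x z"
  by (simp add: dot_def distrib_left sum.distrib)

lemma dot_scale_right: "dot n x (\<lambda>i. c * y i) = c * dot n x y"
  by (simp add: dot_def sum_distrib_left mult.left_commute)

lemma dot_scale_left: "dot n (\<lambda>i. c * x i) y = c * dot n x y"
  by (simp add: dot_def sum_distrib_left mult.assoc)

lemma dot_self_eq_0D:
  assumes "dot n x x = 0" "i \<in> {1..n}"
  shows "x i = 0"
  using assms sum_nonneg_eq_0_iff[of "{1..n}" "\<lambda>i. x i * x i"] by (simp add: dot_def)

lemma polyvec_diff: "polyvec n (p - q) = (\<lambda>i. polyvec n p i - polyvec n q i)"
  by (simp add: polyvec_def fun_eq_iff)

lemma polyvec_add: "polyvec n (p + q) = (\<lambda>i. polyvec n p i + polyvec n q i)"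
  by (simp add: polyvec_def fun_eq_iff)

lemma polyvec_smult: "polyvec n (smult c p) = (\<lambda>i. c * polyvec n p i)"
  by (simp add: polyvec_def fun_eq_iff)

definition ls_fit :: "nat \<Rightarrow> nat \<Rightarrow> (nat \<Rightarrow> real) \<Rightarrow> real poly \<Rightarrow> bool" where
  "ls_fit n r \<theta> p \<longleftrightarrow> degree p \<le> r \<and>
     (\<forall>q. degree q \<le> r \<longrightarrow> dot n (\<lambda>i. \<theta> i - polyvec n p i) (polyvec n q) = 0)"

lemma ls_fit_0: "ls_fit n 0 \<theta> [:(\<Sum>i=1..n. \<theta> i) / real n:]"
proof -
  have "dot n (\<lambda>i. \<theta> i - polyvec n [:(\<Sum>i=1..n. \<theta> i) / real n:] i) (polyvec n [:d:]) = 0" for d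
    by (simp add: dot_def polyvec_def sum_subtractf flip: sum_distrib_right)
  then show ?thesis
    by (auto simp: ls_fit_def elim: degree_eq_zeroE)
qed

lemma degree_diff_smult_monic_le:
  fixes q W :: "'a::comm_ring_1 poly"
  assumes "degree q \<le> Suc r" "degree W \<le> Suc r" "coeff W (Suc r) = 1"
  shows "degree (q - smult (coeff q (Suc r)) W) \<le> r"
proof (rule degree_le, intro allI impI)
  fix i assume "r < i"
  then consider "i = Suc r" | "Suc r < i" by linarith
  then show "coeff (q - smult (coeff q (Suc r)) W) i = 0"
    by cases (use assms in \<open>simp_all add: coeff_eq_0\<close>)
qed

lemma ls_fit_Suc:
  assumes W: "degree W \<le> Suc r" "coeff W (Suc r) = 1"
    and W_orth: "\<And>q. degree q \<le> r \<Longrightarrow> dot n (polyvec n W) (polyvec n q) = 0"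
    and p: "ls_fit n r \<theta> p"
  defines "e \<equiv> \<lambda>i. \<theta> i - polyvec n p i" and "w \<equiv> polyvec n W"
  shows "ls_fit n (Suc r) \<theta> (p + smult (dot n e w / dot n w w) W)"
proof -
  define c where "c = dot n e w / dot n w w"
  define e' where "e' = (\<lambda>i. e i - c * w i)"
  have e'_eq: "(\<lambda>i. \<theta> i - polyvec n (p + smult c W) i) = e'"
    by (simp add: e'_def e_def w_def polyvec_add polyvec_smult fun_eq_iff)
  have e'_low: "dot n e' (polyvec n q) = 0" if "degree q \<le> r" for q
    using p that W_orth[OF that]
    by (simp add: e'_def e_def w_def ls_fit_def dot_diff_left dot_scale_left)
  have "dot n e' w = dot n e w - c * dot n w w"
    by (simp add: e'_def dot_diff_left dot_scale_left)
  moreover have "dot n e w = 0" if "dot n w w = 0"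
    by (simp add: dot_def dot_self_eq_0D[OF that])
  ultimately have e'_w: "dot n e' w = 0"
    by (cases "dot n w w = 0") (simp_all add: c_def)
  have "dot n e' (polyvec n q) = 0" if q: "degree q \<le> Suc r" for q
  proof -
    define q' where "q' = q - smult (coeff q (Suc r)) W"
    have "polyvec n q = (\<lambda>i. coeff q (Suc r) * w i + polyvec n q' i)"
      by (simp add: q'_def w_def polyvec_diff polyvec_smult)
    moreover have "degree q' \<le> r"
      unfolding q'_def using q W by (rule degree_diff_smult_monic_le)
    ultimately show ?thesis
      using e'_w e'_low by (simp add: dot_add_right dot_scale_right)
  qed
  moreover have "degree (p + smult c W) \<le> Suc r"
  proof (rule degree_add_le)
    show "degree p \<le> Suc r"
      using p by (simp add: ls_fit_def)
    show "degree (smult c W) \<le> Suc r"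
      using W(1) by (rule order_trans[OF degree_smult_le])
  qed
  ultimately show ?thesis
    unfolding c_def[symmetric] ls_fit_def e'_eq by simp
qed

lemma ex_ls_fit: "\<exists>p. ls_fit n r \<theta> p"
proof (induction r arbitrary: \<theta>)
  case 0
  then show ?case using ls_fit_0 by blast
next
  case (Suc r)
  obtain pw where pw: "ls_fit n r (polyvec n (monom 1 (Suc r))) pw"
    using Suc.IH by blast
  define W where "W = monom 1 (Suc r) - pw"
  have "degree W \<le> Suc r" "coeff W (Suc r) = 1"
    using pw by (auto simp: W_def ls_fit_def coeff_eq_0 degree_monom_le intro: degree_diff_le)
  moreover have "dot n (polyvec n W) (polyvec n q) = 0" if "degree q \<le> r" for q
    using pw that by (simp add: W_def ls_fit_def polyvec_diff)
  moreover obtain p where "ls_fit n r \<theta> p"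
    using Suc.IH by blast
  ultimately show ?case
    using ls_fit_Suc by blast
qed

lemma ls_fit_unique:
  assumes "ls_fit n r \<theta> p" "ls_fit n r \<theta> p'"
  shows "polyvec n p = polyvec n p'"
proof -
  define d where "d = polyvec n (p - p')"
  have "degree (p - p') \<le> r"
    using assms by (auto simp: ls_fit_def intro: degree_diff_le)
  then have "dot n (\<lambda>i. \<theta> i - polyvec n p i) d = 0" "dot n (\<lambda>i. \<theta> i - polyvec n p' i) d = 0"
    using assms by (auto simp: ls_fit_def d_def)
  then have "dot n d d = 0"
    by (simp add: d_def polyvec_diff dot_diff_left)
  then have "d i = 0" for i
    using dot_self_eq_0D[of n d i] by (cases "i \<in> {1..n}") (auto simp: d_def polyvec_def)
  then show ?thesis
    by (simp add: d_def polyvec_diff fun_eq_iff)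
qed

lemma proj_eq_polyvec:
  assumes "ls_fit n r \<theta> p"
  shows "proj n r \<theta> = polyvec n p"
  unfolding proj_def
proof (rule the_equality)
  show "(\<exists>p'. degree p' \<le> r \<and> polyvec n p = polyvec n p') \<and>
      (\<forall>q. degree q \<le> r \<longrightarrow> (\<Sum>i = 1..n. (\<theta> i - polyvec n p i) * polyvec n q i) = 0)"
    using assms by (auto simp: ls_fit_def dot_def)
next
  fix v
  assume "(\<exists>p'. degree p' \<le> r \<and> v = polyvec n p') \<and>
      (\<forall>q. degree q \<le> r \<longrightarrow> (\<Sum>i = 1..n. (\<theta> i - v i) * polyvec n q i) = 0)"
  then obtain p' where "v = polyvec n p'" "ls_fit n r \<theta> p'"
    by (auto simp: ls_fit_def dot_def)
  then show "v = polyvec n p"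
    using ls_fit_unique[OF assms] by simp
qed

lemma Dk_Suc: "Dk (Suc s) \<theta> = Dk s (D1 \<theta>)"
  unfolding Dk_def funpow_Suc_right by simp

lemma abs_le_sum_abs_D1:
  fixes g :: "nat \<Rightarrow> real"
  assumes "g 1 = 0" "i \<in> {1..n}"
  shows "\<bar>g i\<bar> \<le> (\<Sum>j=1..n-1. \<bar>D1 g j\<bar>)"
proof -
  have partial: "\<bar>g (k + 1)\<bar> \<le> (\<Sum>j=1..k. \<bar>D1 g j\<bar>)" for k
  proof (induction k)
    case (Suc k)
    have "\<bar>g (Suc k + 1)\<bar> \<le> \<bar>g (k + 1)\<bar> + \<bar>D1 g (Suc k)\<bar>"
      by (simp add: D1_def)
    then show ?case using Suc by simp
  qed (use assms(1) in simp)
  obtain k where "i = k + 1" "k \<le> n - 1"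
    using assms(2) by (cases i) auto
  moreover have "(\<Sum>j=1..k. \<bar>D1 g j\<bar>) \<le> (\<Sum>j=1..n-1. \<bar>D1 g j\<bar>)"
    using \<open>k \<le> n - 1\<close> by (intro sum_mono2) auto
  ultimately show ?thesis
    using partial[of k] by simp
qed

text \<open>By Pascal's rule, x gchoose Suc k is an antidifference of x gchoose k.\<close>
lemma abs_sub_antidiff_le:
  assumes D1_approx: "\<And>j. j \<in> {1..n-1} \<Longrightarrow> \<bar>D1 \<theta> j - (\<Sum>k\<le>s. c k * ((real j - 1) gchoose k))\<bar> \<le> \<epsilon>"
    and i: "i \<in> {1..n}"
  shows "\<bar>\<theta> i - (\<theta> 1 + (\<Sum>k\<le>s. c k * ((real i - 1) gchoose Suc k)))\<bar> \<le> real (n - 1) * \<epsilon>"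
proof -
  define g where "g i = \<theta> i - (\<theta> 1 + (\<Sum>k\<le>s. c k * ((real i - 1) gchoose Suc k)))" for i
  have "D1 g j = D1 \<theta> j - (\<Sum>k\<le>s. c k * ((real j - 1) gchoose k))" for j
    using gbinomial_Suc_Suc[of "real j - 1"]
    by (simp add: g_def D1_def distrib_left sum.distrib algebra_simps)
  then have "\<bar>g i\<bar> \<le> (\<Sum>j=1..n-1. \<bar>D1 \<theta> j - (\<Sum>k\<le>s. c k * ((real j - 1) gchoose k))\<bar>)"
    using abs_le_sum_abs_D1[of g, OF _ i] by (simp add: g_def)
  also have "\<dots> \<le> (\<Sum>j=1..n-1. \<epsilon>)"
    by (rule sum_mono) (rule D1_approx)
  also have "\<dots> = real (n - 1) * \<epsilon>"
    by simp
  finally show ?thesis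
    by (simp add: g_def)
qed

lemma discrete_taylor:
  "\<exists>c::nat \<Rightarrow> real. \<forall>i\<in>{1..n}. \<bar>\<theta> i - (\<Sum>k\<le>s. c k * ((real i - 1) gchoose k))\<bar>
      \<le> real n ^ s * (\<Sum>j=1..n-(s+1). \<bar>Dk (s+1) \<theta> j\<bar>)"
proof (induction s arbitrary: \<theta> n)
  case 0
  have "\<bar>\<theta> i - \<theta> 1\<bar> \<le> (\<Sum>j=1..n-1. \<bar>Dk 1 \<theta> j\<bar>)" if "i \<in> {1..n}" for i
    using abs_le_sum_abs_D1[of "\<lambda>i. \<theta> i - \<theta> 1" i n] that by (simp add: Dk_def D1_def)
  then show ?case by (intro exI[of _ "\<lambda>_. \<theta> 1"]) simp
next
  case (Suc s)
  define T where "T = (\<Sum>j=1..n-(Suc s+1). \<bar>Dk (Suc s+1) \<theta> j\<bar>)"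
  obtain c' where c': "\<forall>j\<in>{1..n-1}. \<bar>D1 \<theta> j - (\<Sum>k\<le>s. c' k * ((real j - 1) gchoose k))\<bar>
      \<le> real (n-1) ^ s * T"
    using Suc.IH[of "n - 1" "D1 \<theta>"] unfolding T_def by (simp add: Dk_Suc[symmetric]) blast
  define c where "c k = (if k = 0 then \<theta> 1 else c' (k - 1))" for k
  have "\<bar>\<theta> i - (\<Sum>k\<le>Suc s. c k * ((real i - 1) gchoose k))\<bar> \<le> real n ^ Suc s * T"
    if i: "i \<in> {1..n}" for i
  proof -
    have "(\<Sum>k\<le>Suc s. c k * (x gchoose k)) = \<theta> 1 + (\<Sum>k\<le>s. c' k * (x gchoose Suc k))" for x
      by (simp add: c_def sum.atMost_Suc_shift del: sum.atMost_Suc)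
    then have "\<bar>\<theta> i - (\<Sum>k\<le>Suc s. c k * ((real i - 1) gchoose k))\<bar> \<le> real (n - 1) * (real (n - 1) ^ s * T)"
      using abs_sub_antidiff_le[OF _ i] c' by simp
    also have "\<dots> \<le> real n ^ Suc s * T"
      unfolding power_Suc mult.assoc[symmetric] T_def
      by (intro mult_right_mono mult_mono power_mono sum_nonneg) auto
    finally show ?thesis .
  qed
  then show ?case
    unfolding T_def by blast
qed

definition binomial_poly :: "nat \<Rightarrow> real poly" where
  "binomial_poly k = smult (1 / fact k) (\<Prod>i=0..<k. [:- of_nat i, 1:])"

lemma poly_binomial_poly: "poly (binomial_poly k) x = x gchoose k"
  by (simp add: binomial_poly_def poly_prod gbinomial_prod_rev)

lemma degree_binomial_poly: "degree (binomial_poly k) \<le> k"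
proof -
  have "degree (\<Prod>i=0..<k. [:- of_nat i, 1::real:]) \<le> (\<Sum>i=0..<k. degree [:- of_nat i, 1::real:])"
    using degree_prod_sum_le[of "{0..<k}" "\<lambda>i. [:- of_nat i, 1::real:]"] by (simp add: comp_def)
  then show ?thesis
    unfolding binomial_poly_def by (simp add: order_trans[OF degree_smult_le])
qed

lemma ex_poly_grid_approx:
  "\<exists>Q. degree Q \<le> r \<and> (\<forall>i\<in>{1..n}. \<bar>\<theta> i - poly Q (real i / real n)\<bar> \<le> TV n (r + 1) \<theta>)"
proof -
  obtain c where c: "\<forall>i\<in>{1..n}. \<bar>\<theta> i - (\<Sum>k\<le>r. c k * ((real i - 1) gchoose k))\<bar>
      \<le> real n ^ r * (\<Sum>j=1..n-(r+1). \<bar>Dk (r+1) \<theta> j\<bar>)"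
    using discrete_taylor by blast
  define Q0 where "Q0 = (\<Sum>k\<le>r. smult (c k) (binomial_poly k))"
  define Q where "Q = pcompose Q0 [:-1, real n:]"
  have "degree Q0 \<le> r"
    unfolding Q0_def using degree_binomial_poly
    by (intro degree_sum_le) (auto intro: order_trans[OF degree_smult_le] order_trans[OF degree_binomial_poly])
  then have "degree Q \<le> r"
    unfolding Q_def using degree_pcompose_le[of Q0 "[:-1, real n:]"] by (auto intro: order_trans)
  moreover have "poly Q (real i / real n) = (\<Sum>k\<le>r. c k * ((real i - 1) gchoose k))"
    if "i \<in> {1..n}" for i
    using that by (simp add: Q_def Q0_def poly_pcompose poly_sum poly_binomial_poly)
  ultimately show ?thesis
    using c by (auto simp: TV_def)
qed

lemma sum_abs_le_card_mult_if_orthogonal: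
  fixes h u :: "'a \<Rightarrow> real"
  assumes orth: "(\<Sum>i\<in>I. (h i - u i) * u i) = 0" and h: "\<And>i. i \<in> I \<Longrightarrow> \<bar>h i\<bar> \<le> H"
  shows "(\<Sum>i\<in>I. \<bar>u i\<bar>) \<le> real (card I) * H"
proof -
  define S where "S = (\<Sum>i\<in>I. \<bar>u i\<bar>)"
  have "(\<Sum>i\<in>I. (u i)\<^sup>2) = (\<Sum>i\<in>I. h i * u i)"
    using orth by (simp add: power2_eq_square left_diff_distrib sum_subtractf)
  also have "\<dots> \<le> (\<Sum>i\<in>I. H * \<bar>u i\<bar>)"
  proof (rule sum_mono)
    fix i assume "i \<in> I"
    have "h i * u i \<le> \<bar>h i\<bar> * \<bar>u i\<bar>"
      by (simp flip: abs_mult)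
    also have "\<dots> \<le> H * \<bar>u i\<bar>"
      using h[OF \<open>i \<in> I\<close>] by (rule mult_right_mono) simp
    finally show "h i * u i \<le> H * \<bar>u i\<bar>" .
  qed
  finally have "(\<Sum>i\<in>I. (u i)\<^sup>2) \<le> H * S"
    by (simp add: S_def sum_distrib_left)
  have "S\<^sup>2 \<le> (\<Sum>i\<in>I. (u i)\<^sup>2) * real (card I)"
    using sum_squared_le_sum_of_squares[of "\<lambda>i. \<bar>u i\<bar>" I] by (simp add: S_def)
  also have "\<dots> \<le> (H * S) * real (card I)"
    using \<open>(\<Sum>i\<in>I. (u i)\<^sup>2) \<le> H * S\<close> by (rule mult_right_mono) simp
  finally have "S * S \<le> (real (card I) * H) * S"
    by (simp add: power2_eq_square algebra_simps)
  moreover have "0 \<le> real (card I) * H"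
  proof (cases "I = {}")
    case False
    then obtain x where "x \<in> I" by blast
    then have "0 \<le> H"
      using h[of x] abs_ge_zero[of "h x"] by linarith
    then show ?thesis by simp
  qed simp
  moreover have "S \<ge> 0"
    by (simp add: S_def sum_nonneg)
  ultimately have "S \<le> real (card I) * H"
    by (cases "S = 0") (auto intro: mult_right_le_imp_le)
  then show ?thesis
    by (simp add: S_def)
qed

lemma abs_sub_proj_le:
  assumes i: "i \<in> {1..n}"
  shows "\<bar>\<theta> i - proj n r \<theta> i\<bar> \<le> (1 + 4 * (real r + 1)\<^sup>2 * 2 ^ (r + 1)) * TV n (r + 1) \<theta>"
proof -
  define C :: real where "C = 4 * (real r + 1)\<^sup>2 * 2 ^ (r + 1)"
  define H where "H = TV n (r + 1) \<theta>"
  obtain p where p: "ls_fit n r \<theta> p"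
    using ex_ls_fit by blast
  obtain Q where Q: "degree Q \<le> r" "\<And>j. j \<in> {1..n} \<Longrightarrow> \<bar>\<theta> j - poly Q (real j / real n)\<bar> \<le> H"
    unfolding H_def using ex_poly_grid_approx by blast
  define u where "u j = poly (p - Q) (real j / real n)" for j
  have deg: "degree (p - Q) \<le> r"
    using p Q by (auto simp: ls_fit_def intro: degree_diff_le)
  have proj_eq: "proj n r \<theta> j = poly Q (real j / real n) + u j" if "j \<in> {1..n}" for j
    using that by (simp add: proj_eq_polyvec[OF p] polyvec_def u_def)
  have "(\<Sum>j=1..n. ((\<theta> j - poly Q (real j / real n)) - u j) * u j)
      = dot n (\<lambda>j. \<theta> j - polyvec n p j) (polyvec n (p - Q))"
    unfolding dot_def by (intro sum.cong) (auto simp: polyvec_def u_def algebra_simps)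
  also have "\<dots> = 0"
    using p deg by (simp add: ls_fit_def)
  finally have "(\<Sum>j=1..n. \<bar>u j\<bar>) \<le> real n * H"
    using sum_abs_le_card_mult_if_orthogonal[where I = "{1..n}" and u = u] Q(2) by simp
  then have "C * (\<Sum>j=1..n. \<bar>u j\<bar>) \<le> C * (real n * H)"
    by (rule mult_left_mono) (simp add: C_def)
  then have "real n * \<bar>u i\<bar> \<le> C * (real n * H)"
    using real_mult_abs_poly_grid_le[OF deg i] unfolding C_def u_def by linarith
  then have "real n * \<bar>u i\<bar> \<le> real n * (C * H)"
    by (simp add: algebra_simps)
  then have "\<bar>u i\<bar> \<le> C * H"
    using i by simp
  then show ?thesis
    using Q(2)[OF i] proj_eq[OF i] by (simp add: C_def H_def distrib_right)
qed

theorem lemma11: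
  fixes r :: nat
  shows "\<exists>C>0. \<forall>n \<ge> 1. \<forall>\<theta> :: nat \<Rightarrow> real.
           supnorm n (\<lambda>i. \<theta> i - proj n r \<theta> i) \<le> C * TV n (r + 1) \<theta>"
proof -
  define C :: real where "C = 1 + 4 * (real r + 1)\<^sup>2 * 2 ^ (r + 1)"
  have "supnorm n (\<lambda>i. \<theta> i - proj n r \<theta> i) \<le> C * TV n (r + 1) \<theta>" if "n \<ge> 1" for n \<theta>
    unfolding supnorm_def C_def using that abs_sub_proj_le by (subst Max_le_iff) auto
  moreover have "C > 0"
    by (simp add: C_def add_pos_nonneg)
  ultimately show ?thesis
    by blast
qed

end
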